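(* Let $\Lambda$ be a finite $k$-graph with no sources and let $\{t_\lambda\}_{\lambda\in\Lambda}$ be a purely atomic representation of $C^*(\Lambda)$ on a separable Hilbert space $\mathcal H$ with $t_\lambda t_\lambda^*\neq0$ for all $\lambda\in\Lambda$. Then the representation is monic if and only if $P(\{x\})$ is a rank-one projection for every atom $x$ of the associated projection-valued measure $P$. Moreover, in this case the measure $\mu_\pi$ associated to the monic representation is purely atomic.
   Context: $k$-graph: countable small category with degree $d:\Lambda\to\mathbb N^k$ with unique factorization; finite, no sources. $\Lambda^\infty$: infinite paths with cylinder sets $Z(\lambda)$ and Borel $\sigma$-algebra. The projection-valued measure $P$ of a representation $\{t_\lambda\}$ of $C^*(\Lambda)$ is the one with $P(Z(\lambda))=t_\lambda t_\lambda^*$; its atoms are the points $x$ with $P(\{x\})\ne0$. Purely atomic: there is Borel $\Omega$ with $P(\Lambda^\infty\setminus\Omega)=0$, $P(\{\omega\})\ne0$ for $\omega\in\Omega$, and $\bigoplus_{\omega\in\Omega}P(\{\omega\})=\mathrm{Id}$ strongly. Monic: $t_\lambda\neq 0$ for all $\lambda$ and there is $\xi$ with $\overline{\operatorname{span}}\{t_\lambda t_\lambda^*\xi\}=\mathcal H$; then $\mu_\pi$ is the Borel measure with $\mu_\pi(Z(\lambda))=\langle\xi,t_\lambda t_\lambda^*\xi\rangle$. *)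

theory Defs
  imports "HOL-Analysis.Analysis"
begin

text \<open>HOL-Analysis only provides real inner product spaces, so we introduce complex
inner product spaces as a type class. The inner product is conjugate-linear in the
first and linear in the second argument.\<close>

class complex_inner = real_normed_vector +
  fixes cscale :: "complex \<Rightarrow> 'a \<Rightarrow> 'a"
    and cinner :: "'a \<Rightarrow> 'a \<Rightarrow> complex"
  assumes scaleR_cscale: "scaleR r x = cscale (complex_of_real r) x"
    and cscale_add_right: "cscale a (x + y) = cscale a x + cscale a y"
    and cscale_add_left: "cscale (a + b) x = cscale a x + cscale b x"
    and cscale_cscale: "cscale a (cscale b x) = cscale (a * b) x"
    and cscale_one: "cscale 1 x = x"
    and cinner_commute: "cinner x y = cnj (cinner y x)"
    and cinner_add_left: "cinner (x + y) z = cinner x z + cinner y z"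
    and cinner_cscale_left: "cinner (cscale a x) y = cnj a * cinner x y"
    and cinner_self_nonneg: "0 \<le> Re (cinner x x)"
    and cinner_self_eq_zero: "cinner x x = 0 \<longleftrightarrow> x = 0"
    and norm_eq_sqrt_cinner: "norm x = sqrt (Re (cinner x x))"

class chilbert_space = complex_inner + complete_space

definition separable_type :: "'h::metric_space itself \<Rightarrow> bool" where
  "separable_type _ \<longleftrightarrow> (\<exists>D::'h set. countable D \<and> closure D = UNIV)"

definition cspan :: "'h::complex_inner set \<Rightarrow> 'h set" where
  "cspan S = {\<Sum>x\<in>F. cscale (c x) x | F c. finite F \<and> F \<subseteq> S}"

definition clinear :: "('h::complex_inner \<Rightarrow> 'h) \<Rightarrow> bool" where
  "clinear T \<longleftrightarrow> (\<forall>x y. T (x + y) = T x + T y) \<and> (\<forall>c x. T (cscale c x) = cscale c (T x))"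

definition bounded_clinear :: "('h::complex_inner \<Rightarrow> 'h) \<Rightarrow> bool" where
  "bounded_clinear T \<longleftrightarrow> clinear T \<and> (\<exists>K. \<forall>x. norm (T x) \<le> norm x * K)"

definition adj :: "('h::complex_inner \<Rightarrow> 'h) \<Rightarrow> ('h \<Rightarrow> 'h)" where
  "adj T = (SOME S. \<forall>x y. cinner (S x) y = cinner x (T y))"

definition is_projection :: "('h::complex_inner \<Rightarrow> 'h) \<Rightarrow> bool" where
  "is_projection P \<longleftrightarrow> bounded_clinear P \<and> P \<circ> P = P \<and> adj P = P"

definition rank_one :: "('h::complex_inner \<Rightarrow> 'h) \<Rightarrow> bool" where
  "rank_one P \<longleftrightarrow> (\<exists>v. v \<noteq> 0 \<and> range P = range (\<lambda>c. cscale c v))"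

text \<open>A k-graph: a countable small category (given by its set of morphisms, source,
range and composition; objects are identified with identity morphisms) together
with a degree functor into \<open>\<nat>^k\<close> (modelled as \<open>'k \<Rightarrow> nat\<close> for a finite type
\<open>'k\<close> with \<open>CARD('k) = k\<close>) satisfying the unique factorisation property.
\<open>comp \<lambda> \<mu>\<close> is the composite \<open>\<lambda>\<mu>\<close>, defined when \<open>s \<lambda> = r \<mu>\<close>.\<close>

record ('a, 'k) kgraph =
  mor :: "'a set"
  src :: "'a \<Rightarrow> 'a"
  rng :: "'a \<Rightarrow> 'a"
  comp :: "'a \<Rightarrow> 'a \<Rightarrow> 'a"
  deg :: "'a \<Rightarrow> 'k \<Rightarrow> nat"

definition is_kgraph :: "('a, 'k::finite) kgraph \<Rightarrow> bool" where
  "is_kgraph G \<longleftrightarrow>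
     countable (mor G) \<and>
     (\<forall>l\<in>mor G. src G l \<in> mor G \<and> rng G l \<in> mor G) \<and>
     (\<forall>l\<in>mor G. src G (src G l) = src G l \<and> rng G (src G l) = src G l \<and>
                 src G (rng G l) = rng G l \<and> rng G (rng G l) = rng G l) \<and>
     (\<forall>l\<in>mor G. \<forall>m\<in>mor G. src G l = rng G m \<longrightarrow>
         comp G l m \<in> mor G \<and> src G (comp G l m) = src G m \<and> rng G (comp G l m) = rng G l) \<and>
     (\<forall>l\<in>mor G. comp G (rng G l) l = l \<and> comp G l (src G l) = l) \<and>
     (\<forall>l\<in>mor G. \<forall>m\<in>mor G. \<forall>n\<in>mor G. src G l = rng G m \<longrightarrow> src G m = rng G n \<longrightarrow>
         comp G (comp G l m) n = comp G l (comp G m n)) \<and>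
     (\<forall>l\<in>mor G. \<forall>m\<in>mor G. src G l = rng G m \<longrightarrow>
         deg G (comp G l m) = (\<lambda>i. deg G l i + deg G m i)) \<and>
     (\<forall>l\<in>mor G. \<forall>p q. deg G l = (\<lambda>i. p i + q i) \<longrightarrow>
         (\<exists>!(m, n). m \<in> mor G \<and> n \<in> mor G \<and> src G m = rng G n \<and>
                    deg G m = p \<and> deg G n = q \<and> comp G m n = l))"

definition vertices :: "('a, 'k) kgraph \<Rightarrow> 'a set" where
  "vertices G = {v \<in> mor G. deg G v = (\<lambda>_. 0)}"

definition finite_kgraph :: "('a, 'k) kgraph \<Rightarrow> bool" where
  "finite_kgraph G \<longleftrightarrow> (\<forall>n. finite {l \<in> mor G. deg G l = n})"

definition no_sources :: "('a, 'k) kgraph \<Rightarrow> bool" where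
  "no_sources G \<longleftrightarrow> (\<forall>v\<in>vertices G. \<forall>n. \<exists>l\<in>mor G. rng G l = v \<and> deg G l = n)"

text \<open>Infinite paths: degree-preserving functors \<open>x : \<Omega>_k \<rightarrow> \<Lambda>\<close>, where \<open>\<Omega>_k\<close> has
morphisms \<open>(m,n)\<close>, \<open>m \<le> n\<close>; \<open>x m n\<close> is the image of \<open>(m,n)\<close> (and \<open>undefined\<close> off
the domain, to make the representation unique).\<close>
definition inf_paths :: "('a, 'k) kgraph \<Rightarrow> (('k \<Rightarrow> nat) \<Rightarrow> ('k \<Rightarrow> nat) \<Rightarrow> 'a) set" where
  "inf_paths G = {x.
     (\<forall>m n. m \<le> n \<longrightarrow> x m n \<in> mor G \<and> deg G (x m n) = (\<lambda>i. n i - m i)) \<and>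
     (\<forall>m n p. m \<le> n \<longrightarrow> n \<le> p \<longrightarrow>
        src G (x m n) = rng G (x n p) \<and> comp G (x m n) (x n p) = x m p) \<and>
     (\<forall>m n. \<not> m \<le> n \<longrightarrow> x m n = undefined)}"

definition cyl :: "('a, 'k) kgraph \<Rightarrow> 'a \<Rightarrow> (('k \<Rightarrow> nat) \<Rightarrow> ('k \<Rightarrow> nat) \<Rightarrow> 'a) set" where
  "cyl G l = {x \<in> inf_paths G. x (\<lambda>_. 0) (deg G l) = l}"

text \<open>Borel structure on \<open>\<Lambda>^\<infinity>\<close>: the cylinder sets form a countable basis of the
topology, so the Borel sigma-algebra is the one generated by the cylinder sets.\<close>
definition path_space :: "('a, 'k) kgraph \<Rightarrow> (('k \<Rightarrow> nat) \<Rightarrow> ('k \<Rightarrow> nat) \<Rightarrow> 'a) measure" where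
  "path_space G = sigma (inf_paths G) (cyl G ` mor G)"

text \<open>A representation of \<open>C*(\<Lambda>)\<close> is (by the universal property) a Cuntz-Krieger
\<open>\<Lambda>\<close>-family of bounded operators.\<close>
definition ck_family :: "('a, 'k) kgraph \<Rightarrow> ('a \<Rightarrow> 'h::complex_inner \<Rightarrow> 'h) \<Rightarrow> bool" where
  "ck_family G t \<longleftrightarrow>
     (\<forall>l\<in>mor G. bounded_clinear (t l)) \<and>
     (\<forall>v\<in>vertices G. is_projection (t v)) \<and>
     (\<forall>v\<in>vertices G. \<forall>w\<in>vertices G. v \<noteq> w \<longrightarrow> t v \<circ> t w = (\<lambda>_. 0)) \<and>
     (\<forall>l\<in>mor G. \<forall>m\<in>mor G. src G l = rng G m \<longrightarrow> t (comp G l m) = t l \<circ> t m) \<and>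
     (\<forall>l\<in>mor G. adj (t l) \<circ> t l = t (src G l)) \<and>
     (\<forall>v\<in>vertices G. \<forall>n. t v =
        (\<lambda>h. \<Sum>l\<in>{l \<in> mor G. rng G l = v \<and> deg G l = n}. t l (adj (t l) h)))"

definition pvm :: "'p measure \<Rightarrow> ('p set \<Rightarrow> 'h::complex_inner \<Rightarrow> 'h) \<Rightarrow> bool" where
  "pvm M P \<longleftrightarrow>
     (\<forall>E\<in>sets M. is_projection (P E)) \<and>
     P (space M) = id \<and>
     (\<forall>A::nat \<Rightarrow> 'p set. range A \<subseteq> sets M \<longrightarrow> disjoint_family A \<longrightarrow>
        (\<forall>h. (\<lambda>i. P (A i) h) sums P (\<Union>i. A i) h))"

definition pvm_of_rep :: "('a, 'k) kgraph \<Rightarrow> ('a \<Rightarrow> 'h::complex_inner \<Rightarrow> 'h)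
    \<Rightarrow> ((('k \<Rightarrow> nat) \<Rightarrow> ('k \<Rightarrow> nat) \<Rightarrow> 'a) set \<Rightarrow> 'h \<Rightarrow> 'h) \<Rightarrow> bool" where
  "pvm_of_rep G t P \<longleftrightarrow> pvm (path_space G) P \<and>
     (\<forall>l\<in>mor G. P (cyl G l) = t l \<circ> adj (t l))"

definition is_atom :: "'p measure \<Rightarrow> ('p set \<Rightarrow> 'h::complex_inner \<Rightarrow> 'h) \<Rightarrow> 'p \<Rightarrow> bool" where
  "is_atom M P x \<longleftrightarrow> x \<in> space M \<and> {x} \<in> sets M \<and> P {x} \<noteq> (\<lambda>_. 0)"

definition purely_atomic_pvm :: "'p measure \<Rightarrow> ('p set \<Rightarrow> 'h::complex_inner \<Rightarrow> 'h) \<Rightarrow> bool" where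
  "purely_atomic_pvm M P \<longleftrightarrow>
     (\<exists>\<Omega>\<in>sets M. P (space M - \<Omega>) = (\<lambda>_. 0) \<and>
        (\<forall>\<omega>\<in>\<Omega>. {\<omega>} \<in> sets M \<and> P {\<omega>} \<noteq> (\<lambda>_. 0)) \<and>
        (\<forall>h. ((\<lambda>\<omega>. P {\<omega>} h) has_sum h) \<Omega>))"

definition cyclic_vector :: "('a, 'k) kgraph \<Rightarrow> ('a \<Rightarrow> 'h::complex_inner \<Rightarrow> 'h) \<Rightarrow> 'h \<Rightarrow> bool" where
  "cyclic_vector G t \<xi> \<longleftrightarrow>
     closure (cspan {t l (adj (t l) \<xi>) | l. l \<in> mor G}) = UNIV"

definition monic :: "('a, 'k) kgraph \<Rightarrow> ('a \<Rightarrow> 'h::complex_inner \<Rightarrow> 'h) \<Rightarrow> bool" where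
  "monic G t \<longleftrightarrow> (\<forall>l\<in>mor G. t l \<noteq> (\<lambda>_. 0)) \<and> (\<exists>\<xi>. cyclic_vector G t \<xi>)"

definition is_mu_pi :: "('a, 'k) kgraph \<Rightarrow> ('a \<Rightarrow> 'h::complex_inner \<Rightarrow> 'h) \<Rightarrow> 'h
    \<Rightarrow> (('k \<Rightarrow> nat) \<Rightarrow> ('k \<Rightarrow> nat) \<Rightarrow> 'a) measure \<Rightarrow> bool" where
  "is_mu_pi G t \<xi> \<mu> \<longleftrightarrow> sets \<mu> = sets (path_space G) \<and>
     (\<forall>l\<in>mor G. emeasure \<mu> (cyl G l) = ennreal (Re (cinner \<xi> (t l (adj (t l) \<xi>)))))"

definition purely_atomic_measure :: "'p measure \<Rightarrow> bool" where
  "purely_atomic_measure \<mu> \<longleftrightarrow>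
     (\<exists>\<Omega>\<in>sets \<mu>. emeasure \<mu> (space \<mu> - \<Omega>) = 0 \<and>
        (\<forall>\<omega>\<in>\<Omega>. {\<omega>} \<in> sets \<mu> \<and> emeasure \<mu> {\<omega>} \<noteq> 0))"

end

theory Submission
  imports Defs
begin

text \<open>For an atom \<open>x\<close> and
any Borel set \<open>E\<close> we have \<open>P{x} P(E) \<xi> = P({x} \<inter> E) \<xi> \<in> {0, P{x} \<xi>}\<close>, so if \<open>\<xi>\<close> is
cyclic then \<open>P{x}\<close> maps a dense subspace, hence everything, into the line through
\<open>P{x} \<xi>\<close>: atoms are rank one. Conversely, if all atoms are rank one, separability forces
the set of atoms to be countable; choosing unit vectors \<open>u\<^sub>n\<close> spanning them, the vector
\<open>\<xi> = \<Sum> 2\<^sup>-\<^sup>n u\<^sub>n\<close> has \<open>P{x\<^sub>n} \<xi> = 2\<^sup>-\<^sup>n u\<^sub>n\<close>, and since the atoms exhaust \<open>P\<close> the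
vectors \<open>P(E) \<xi>\<close> span a dense subspace. Cylinder sets form a generating \<open>\<inter>\<close>-stable
family, so a Dynkin argument shows that the closed span of the \<open>t\<^sub>\<lambda>t\<^sub>\<lambda>\<^sup>* \<xi> = P(Z(\<lambda>)) \<xi>\<close>
already contains every \<open>P(E) \<xi>\<close>. The same argument identifies \<open>\<mu>\<^sub>\<pi>(E)\<close> with
\<open>\<parallel>P(E) \<xi>\<parallel>\<^sup>2\<close>, which vanishes off the atoms and is positive on each of them.
The Cuntz-Krieger relations and the absence of sources are only needed for the existence
of \<open>P\<close>, which is part of the hypotheses here.\<close>

section \<open>Complex inner product spaces\<close>

context chilbert_space begin
subclass banach ..
end

lemma cscale_zero_left[simp]: "cscale 0 (x::'a::complex_inner) = 0"
proof -
  have "cscale 0 x = cscale 0 x + cscale 0 x" using cscale_add_left[of 0 0 x] by simp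
  thus ?thesis by simp
qed

lemma cscale_zero_right[simp]: "cscale c (0::'a::complex_inner) = 0"
proof -
  have "cscale c (0::'a) = cscale c 0 + cscale c 0" using cscale_add_right[of c 0 0] by simp
  thus ?thesis by simp
qed

lemma cscale_minus_one: "cscale (-1) (x::'a::complex_inner) = - x"
proof -
  have "x + cscale (-1) x = 0" using cscale_add_left[of 1 "-1" x] by (simp add: cscale_one)
  thus ?thesis by (simp add: eq_neg_iff_add_eq_0 add.commute)
qed

lemma cscale_sum: "cscale c (sum f A) = (\<Sum>a\<in>A. cscale c (f a :: 'a::complex_inner))"
  by (induction A rule: infinite_finite_induct) (auto simp: cscale_add_right)

lemma cinner_add_right: "cinner (x::'a::complex_inner) (y + z) = cinner x y + cinner x z"
  by (subst (1 2 3) cinner_commute) (simp add: cinner_add_left)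

lemma cinner_cscale_right: "cinner (x::'a::complex_inner) (cscale a y) = a * cinner x y"
  by (subst (1 2) cinner_commute) (simp add: cinner_cscale_left)

lemma cinner_zero_left[simp]: "cinner (0::'a::complex_inner) y = 0"
  using cinner_add_left[of "0::'a" 0 y] by simp

lemma cinner_zero_right[simp]: "cinner (x::'a::complex_inner) 0 = 0"
  using cinner_add_right[of x 0 0] by simp

lemma cinner_minus_right: "cinner (x::'a::complex_inner) (- y) = - cinner x y"
  using cinner_add_right[of x y "-y"] by (simp add: eq_neg_iff_add_eq_0 add.commute)

lemma cinner_diff_right: "cinner (x::'a::complex_inner) (y - z) = cinner x y - cinner x z"
  using cinner_add_right[of x y "-z"] by (simp add: cinner_minus_right)

lemma cinner_sum_right: "cinner (x::'a::complex_inner) (sum f A) = (\<Sum>a\<in>A. cinner x (f a))"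
  by (induction A rule: infinite_finite_induct) (auto simp: cinner_add_right)

lemma cinner_scaleR_right: "cinner (x::'a::complex_inner) (scaleR r y) = of_real r * cinner x y"
  by (simp add: scaleR_cscale cinner_cscale_right)

lemma cinner_self_real: "cinner (x::'a::complex_inner) x = of_real ((norm x)\<^sup>2)"
proof -
  have c: "cnj (cinner x x) = cinner x x" by (rule sym[OF cinner_commute])
  have "Im (cinner x x) = 0" using arg_cong[OF c, of Im] by simp
  moreover have "Re (cinner x x) = (norm x)\<^sup>2"
    using norm_eq_sqrt_cinner[of x] cinner_self_nonneg[of x] by simp
  ultimately show ?thesis by (simp add: complex_eq_iff)
qed

lemma norm_sq_cinner: "(norm (x::'a::complex_inner))\<^sup>2 = Re (cinner x x)"
  by (simp add: cinner_self_real)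

lemma norm_add_sq:
  "(norm ((x::'a::complex_inner) + y))\<^sup>2 = (norm x)\<^sup>2 + 2 * Re (cinner x y) + (norm y)\<^sup>2"
proof -
  have "cinner (x+y) (x+y) = cinner x x + cinner x y + cinner y x + cinner y y"
    by (simp add: cinner_add_left cinner_add_right)
  moreover have "Re (cinner y x) = Re (cinner x y)" using cinner_commute[of y x] by simp
  ultimately show ?thesis by (simp add: norm_sq_cinner)
qed

lemma parallelogram_law:
  "(norm ((x::'a::complex_inner) - y))\<^sup>2 = 2 * (norm x)\<^sup>2 + 2 * (norm y)\<^sup>2 - (norm (x + y))\<^sup>2"
  using norm_add_sq[of x y] norm_add_sq[of x "-y"] by (simp add: cinner_minus_right)

lemma norm_cscale: "norm (cscale c (x::'a::complex_inner)) = cmod c * norm x"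
proof -
  have "(norm (cscale c x))\<^sup>2 = Re ((cnj c * c) * cinner x x)"
    by (simp only: norm_sq_cinner cinner_cscale_left cinner_cscale_right ac_simps)
  also have "cnj c * c = of_real ((cmod c)\<^sup>2)" by (subst mult.commute) (rule complex_norm_square[symmetric])
  also have "Re (of_real ((cmod c)\<^sup>2) * cinner x x) = (cmod c * norm x)\<^sup>2"
    by (simp add: cinner_self_real power_mult_distrib del: of_real_power)
  finally show ?thesis by (simp add: power2_eq_iff_nonneg)
qed

lemma cmod_cinner_le: "cmod (cinner (x::'a::complex_inner) y) \<le> norm x * norm y"
proof (cases "x = 0")
  case True thus ?thesis by simp
next
  case False
  define c where "c = cinner x y / cinner x x"
  define z where "z = y - cscale c x"
  have xx: "cinner x x = of_real ((norm x)\<^sup>2)" by (rule cinner_self_real)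
  have nx: "norm x > 0" using False by simp
  have xz: "cinner x z = 0"
    using nx by (simp add: z_def c_def cinner_diff_right cinner_cscale_right xx)
  have "y = z + cscale c x" by (simp add: z_def)
  hence "(norm y)\<^sup>2 = (norm z)\<^sup>2 + 2 * Re (cinner z (cscale c x)) + (norm (cscale c x))\<^sup>2"
    using norm_add_sq[of z "cscale c x"] by simp
  moreover have "cinner z (cscale c x) = 0"
    using xz cinner_commute[of z x] by (simp add: cinner_cscale_right)
  ultimately have "(norm y)\<^sup>2 \<ge> (cmod c * norm x)\<^sup>2" by (simp add: norm_cscale)
  hence "norm y \<ge> cmod c * norm x" by (rule power2_le_imp_le) simp
  moreover have "cmod c = cmod (cinner x y) / (norm x)\<^sup>2"
    by (simp add: c_def xx norm_divide del: of_real_power)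
  hence "cmod c * norm x = cmod (cinner x y) / norm x"
    using nx by (simp add: power2_eq_square)
  ultimately have "cmod (cinner x y) / norm x \<le> norm y" by simp
  thus ?thesis using nx by (simp add: divide_le_eq mult.commute)
qed

lemma bounded_linear_cinner_right: "bounded_linear (\<lambda>y. cinner (v::'a::complex_inner) y)"
proof (rule bounded_linear_intro[of _ "norm v"])
  show "cinner v (x + y) = cinner v x + cinner v y" for x y by (rule cinner_add_right)
  show "cinner v (r *\<^sub>R x) = r *\<^sub>R cinner v x" for r x
    by (simp add: cinner_scaleR_right scaleR_conv_of_real)
  show "norm (cinner v x) \<le> norm x * norm v" for x
    using cmod_cinner_le[of v x] by (simp add: mult.commute)
qed

lemma bounded_linear_Re_cinner_right: "bounded_linear (\<lambda>y. Re (cinner (v::'a::complex_inner) y))"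
  using bounded_linear_compose[OF bounded_linear_Re bounded_linear_cinner_right[of v]]
  by (simp add: o_def)

lemma bounded_linear_cscale_left: "bounded_linear (\<lambda>c::complex. cscale c (v::'a::complex_inner))"
proof (rule bounded_linear_intro[of _ "norm v"])
  show "cscale (x + y) v = cscale x v + cscale y v" for x y by (rule cscale_add_left)
  show "cscale (r *\<^sub>R x) v = r *\<^sub>R cscale x v" for r x
    by (simp add: scaleR_cscale cscale_cscale scaleR_conv_of_real)
  show "norm (cscale x v) \<le> norm x * norm v" for x by (simp add: norm_cscale)
qed

lemma bounded_linear_cscale_right: "bounded_linear (\<lambda>x::'a::complex_inner. cscale c x)"
proof (rule bounded_linear_intro[of _ "cmod c"])
  show "cscale c (x + y) = cscale c x + cscale c y" for x y by (rule cscale_add_right)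
  show "cscale c (r *\<^sub>R x) = r *\<^sub>R cscale c x" for r x
    by (simp add: scaleR_cscale cscale_cscale mult.commute)
  show "norm (cscale c x) \<le> norm x * cmod c" for x by (simp add: norm_cscale mult.commute)
qed

lemma bounded_clinear_imp_bounded_linear: "bounded_clinear T \<Longrightarrow> bounded_linear T"
  unfolding bounded_clinear_def clinear_def
  by (auto intro!: bounded_linear_intro simp: scaleR_cscale)

lemma bounded_clinear_add: "bounded_clinear T \<Longrightarrow> T (x + y) = T x + T y"
  unfolding bounded_clinear_def clinear_def by auto

lemma bounded_clinear_cscale: "bounded_clinear T \<Longrightarrow> T (cscale c x) = cscale c (T x)"
  unfolding bounded_clinear_def clinear_def by auto

lemma bounded_clinear_zero: "bounded_clinear T \<Longrightarrow> T 0 = 0"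
  using bounded_clinear_imp_bounded_linear linear_simps(3) bounded_linear.linear by blast

section \<open>The Riesz representation theorem and adjoints\<close>

lemma Cauchy_minimising_sequence:
  fixes Y :: "nat \<Rightarrow> 'a::complex_inner"
  assumes Yn: "\<And>n. (norm (Y n))\<^sup>2 < d + 1 / Suc n" and mid: "\<And>m n. 4 * d \<le> (norm (Y m + Y n))\<^sup>2"
  shows "Cauchy Y"
proof (rule metric_CauchyI)
  have Ydist: "(norm (Y m - Y n))\<^sup>2 \<le> 2 / Suc m + 2 / Suc n" for m n
    using parallelogram_law[of "Y m" "Y n"] mid[of m n] Yn[of m] Yn[of n] by simp
  fix e :: real assume e: "e > 0"
  obtain M :: nat where "4 / e\<^sup>2 < M" using reals_Archimedean2 by blast
  hence "4 / e\<^sup>2 < Suc M" by simp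
  hence M: "4 / Suc M < e\<^sup>2" using e by (simp add: field_simps)
  show "\<exists>M. \<forall>m\<ge>M. \<forall>n\<ge>M. dist (Y m) (Y n) < e"
  proof (intro exI allI impI)
    fix m n assume mn: "m \<ge> M" "n \<ge> M"
    have "2 / real (Suc m) \<le> 2 / Suc M" "2 / real (Suc n) \<le> 2 / Suc M"
      using mn by (auto intro!: divide_left_mono)
    hence "(norm (Y m - Y n))\<^sup>2 < e\<^sup>2" using Ydist[of m n] M by linarith
    thus "dist (Y m) (Y n) < e" using e by (simp add: dist_norm power_less_imp_less_base)
  qed
qed

lemma hyperplane_min_norm_exists:
  fixes f :: "'a::chilbert_space \<Rightarrow> complex"
  assumes add: "\<And>x y. f (x + y) = f x + f y" and fsR: "\<And>r x. f (scaleR r x) = of_real r * f x"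
    and bd: "\<And>x. cmod (f x) \<le> K * norm x" and w: "f w = 1"
  shows "\<exists>z. f z = 1 \<and> (\<forall>y. f y = 1 \<longrightarrow> (norm z)\<^sup>2 \<le> (norm y)\<^sup>2)"
proof -
  define H where "H = {y. f y = 1}"
  define d where "d = (INF y\<in>H. (norm y)\<^sup>2)"
  have HN: "H \<noteq> {}" using w by (auto simp: H_def)
  have bdd: "bdd_below ((\<lambda>y. (norm y)\<^sup>2) ` H)" by (intro bdd_belowI[of _ 0]) auto
  have dle: "d \<le> (norm y)\<^sup>2" if "y \<in> H" for y
    unfolding d_def by (rule cINF_lower[OF bdd that])
  have "\<exists>y\<in>H. (norm y)\<^sup>2 < d + 1 / Suc n" for n
    using cINF_less_iff[OF HN bdd, of "d + 1 / Suc n"] by (simp add: d_def)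
  then obtain Y where YH: "\<And>n. Y n \<in> H" and Yn: "\<And>n. (norm (Y n))\<^sup>2 < d + 1 / Suc n"
    by metis
  have mid: "4 * d \<le> (norm (a + b))\<^sup>2" if "a \<in> H" "b \<in> H" for a b
  proof -
    have "scaleR (1/2) (a + b) \<in> H" using that by (simp add: H_def fsR add)
    hence "d \<le> (norm (scaleR (1/2) (a + b)))\<^sup>2" by (rule dle)
    thus ?thesis by (simp add: power2_eq_square)
  qed
  have "Cauchy Y" using Yn mid[OF YH YH] by (rule Cauchy_minimising_sequence)
  then obtain z where Yz: "Y \<longlonglongrightarrow> z" using Cauchy_convergent_iff convergent_def by blast
  have "bounded_linear f"
    by (rule bounded_linear_intro[of _ K]) (auto simp: add fsR bd mult.commute scaleR_conv_of_real)
  hence "(\<lambda>n. f (Y n)) \<longlonglongrightarrow> f z" using Yz by (rule bounded_linear.tendsto)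
  moreover have "(\<lambda>n. f (Y n)) = (\<lambda>n. 1)" using YH by (auto simp: H_def)
  ultimately have fz: "f z = 1" by (simp add: LIMSEQ_const_iff)
  have "(\<lambda>n. (norm (Y n))\<^sup>2) \<longlonglongrightarrow> (norm z)\<^sup>2" by (intro tendsto_intros Yz)
  moreover have "(\<lambda>n. d + 1 / Suc n) \<longlonglongrightarrow> d"
    using tendsto_add[OF tendsto_const LIMSEQ_inverse_real_of_nat, of d]
    by (simp add: inverse_eq_divide)
  ultimately have "(norm z)\<^sup>2 \<le> d"
    using Yn by (intro LIMSEQ_le[of _ _ "\<lambda>n. d + 1 / Suc n"]) (auto intro: less_imp_le)
  hence "(norm z)\<^sup>2 \<le> (norm y)\<^sup>2" if "f y = 1" for y
  proof -
    have "y \<in> H" using that by (simp add: H_def)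
    thus ?thesis using dle \<open>(norm z)\<^sup>2 \<le> d\<close> by (meson order_trans)
  qed
  thus ?thesis using fz by blast
qed

lemma min_norm_orthogonal_kernel:
  fixes f :: "'a::complex_inner \<Rightarrow> complex"
  assumes add: "\<And>x y. f (x + y) = f x + f y" and sc: "\<And>c x. f (cscale c x) = c * f x"
    and fz: "f z = 1" and min: "\<And>y. f y = 1 \<Longrightarrow> (norm z)\<^sup>2 \<le> (norm y)\<^sup>2"
    and fv: "f v = 0"
  shows "cinner z v = 0"
proof -
  define a where "a = cinner z v"
  define s :: real where "s = 1 / ((norm v)\<^sup>2 + 1)"
  have pos: "(norm v)\<^sup>2 + 1 > 0" using zero_le_power2[of "norm v"] by linarith
  have s0: "s > 0" and s1: "s * (norm v)\<^sup>2 < 1" using pos by (simp_all add: s_def field_simps)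
  define t where "t = - (of_real s * cnj a)"
  have Re_ta: "Re (t * a) = - s * (cmod a)\<^sup>2"
    unfolding cmod_power2 by (simp add: t_def power2_eq_square algebra_simps)
  have cmod_t: "cmod t = s * cmod a" using s0 by (simp add: t_def norm_mult)
  have "(norm z)\<^sup>2 \<le> (norm (z + cscale t v))\<^sup>2" using fz fv by (intro min) (simp add: add sc)
  also have "\<dots> = (norm z)\<^sup>2 + 2 * Re (t * a) + (cmod t * norm v)\<^sup>2"
    by (simp add: norm_add_sq cinner_cscale_right norm_cscale a_def)
  finally have "0 \<le> 2 * Re (t * a) + (cmod t * norm v)\<^sup>2" by simp
  also have "\<dots> = s * (cmod a)\<^sup>2 * (s * (norm v)\<^sup>2 - 2)"
    unfolding Re_ta cmod_t by (simp add: power_mult_distrib power2_eq_square algebra_simps)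
  finally have "0 \<le> s * (cmod a)\<^sup>2 * (s * (norm v)\<^sup>2 - 2)" .
  moreover have "s * (norm v)\<^sup>2 - 2 < 0" using s1 by simp
  ultimately have "s * (cmod a)\<^sup>2 \<le> 0" by (simp add: zero_le_mult_iff)
  hence "cmod a = 0" using s0 by (simp add: mult_le_0_iff)
  thus ?thesis by (simp add: a_def)
qed

lemma riesz_representation:
  fixes f :: "'a::chilbert_space \<Rightarrow> complex"
  assumes add: "\<And>x y. f (x + y) = f x + f y" and sc: "\<And>c x. f (cscale c x) = c * f x"
    and bd: "\<And>x. cmod (f x) \<le> K * norm x"
  shows "\<exists>u. \<forall>y. f y = cinner u y"
proof (cases "\<forall>y. f y = 0")
  case True then show ?thesis by (intro exI[of _ 0]) simp
next
  case False
  then obtain w where "f w \<noteq> 0" by blast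
  hence "f (cscale (1 / f w) w) = 1" by (simp add: sc)
  moreover have fsR: "f (scaleR r x) = of_real r * f x" for r x by (simp add: scaleR_cscale sc)
  ultimately obtain z where fz: "f z = 1" and min: "\<And>y. f y = 1 \<Longrightarrow> (norm z)\<^sup>2 \<le> (norm y)\<^sup>2"
    using hyperplane_min_norm_exists[OF add fsR bd] by blast
  have "z \<noteq> 0" using fz sc[of 0 z] by auto
  hence nz: "(norm z)\<^sup>2 > 0" by simp
  show ?thesis
  proof (intro exI allI)
    fix y
    have "f (y - cscale (f y) z) = 0"
      using add[of "y - cscale (f y) z" "cscale (f y) z"] by (simp add: sc fz)
    hence "cinner z (y - cscale (f y) z) = 0"
      using min_norm_orthogonal_kernel[OF add sc fz min] by blast
    hence "cinner z y = f y * of_real ((norm z)\<^sup>2)"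
      by (simp add: cinner_diff_right cinner_cscale_right cinner_self_real)
    thus "f y = cinner (cscale (1 / of_real ((norm z)\<^sup>2)) z) y"
      using nz by (simp add: cinner_cscale_left field_simps del: of_real_power)
  qed
qed

lemma cinner_adj:
  fixes T :: "'a::chilbert_space \<Rightarrow> 'a"
  assumes T: "bounded_clinear T"
  shows "cinner (adj T x) y = cinner x (T y)"
proof -
  from T obtain K where K: "\<And>x. norm (T x) \<le> norm x * K"
    unfolding bounded_clinear_def by blast
  have "\<exists>u. \<forall>y. cinner x (T y) = cinner u y" for x
  proof (rule riesz_representation[where K = "norm x * K"])
    show "cinner x (T (a + b)) = cinner x (T a) + cinner x (T b)" for a b
      using T by (simp add: bounded_clinear_add cinner_add_right)
    show "cinner x (T (cscale c a)) = c * cinner x (T a)" for c a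
      using T by (simp add: bounded_clinear_cscale cinner_cscale_right)
    show "cmod (cinner x (T a)) \<le> norm x * K * norm a" for a
      using cmod_cinner_le[of x "T a"] mult_left_mono[OF K[of a], of "norm x"]
      by (simp add: mult_ac)
  qed
  hence "\<exists>S. \<forall>x y. cinner (S x) y = cinner x (T y)" by metis
  from someI_ex[OF this] show ?thesis unfolding adj_def by blast
qed

lemma projection_idem: "is_projection P \<Longrightarrow> P (P x) = P x"
  unfolding is_projection_def by (metis comp_apply)

lemma cinner_projection_self:
  fixes P :: "'a::chilbert_space \<Rightarrow> 'a"
  assumes P: "is_projection P"
  shows "cinner x (P x) = of_real ((norm (P x))\<^sup>2)"
proof -
  have "cinner x (P x) = cinner x (P (P x))" using projection_idem[OF P] by simp
  also have "\<dots> = cinner (P x) (P x)"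
    using cinner_adj[of P x "P x"] P unfolding is_projection_def by simp
  finally show ?thesis by (simp add: cinner_self_real)
qed

lemma rank_one_projection_unit_vector:
  assumes P: "is_projection P" and "rank_one P"
  shows "\<exists>u. norm u = 1 \<and> P u = u \<and> (\<forall>h. \<exists>c. P h = cscale c u)"
proof -
  obtain v where v: "v \<noteq> 0" "range P = range (\<lambda>c. cscale c v)"
    using \<open>rank_one P\<close> unfolding rank_one_def by blast
  define u where "u = cscale (of_real (1 / norm v)) v"
  have "norm u = 1" using v(1) by (simp add: u_def norm_cscale norm_divide)
  moreover have "P u = u"
    using v(2) projection_idem[OF P] by (metis (no_types, lifting) rangeE range_eqI u_def)
  moreover have "\<exists>c. P h = cscale c u" for h
  proof -
    obtain c where "P h = cscale c v" using v(2) by blast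
    moreover have "cscale (c * of_real (norm v)) u = cscale c v"
      using v(1) by (simp add: u_def cscale_cscale)
    ultimately show ?thesis by metis
  qed
  ultimately show ?thesis by blast
qed

section \<open>Closed complex spans\<close>

lemma closed_line: "closed (range (\<lambda>c. cscale c (v::'a::complex_inner)))"
proof -
  define g where "g y = cscale (cinner v y / cinner v v) v" for y
  have "bounded_linear g"
    unfolding g_def using bounded_linear_compose[OF bounded_linear_cscale_left[of v]
        bounded_linear_compose[OF bounded_linear_divide[of "cinner v v"]
          bounded_linear_cinner_right[of v]]]
    by (simp add: o_def)
  hence "closed {y. g y = id y}"
    by (intro closed_Collect_eq) (simp_all add: linear_continuous_on continuous_on_id)
  moreover have "range (\<lambda>c. cscale c v) = {y. g y = id y}"
  proof (intro equalityI subsetI)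
    fix y assume "y \<in> range (\<lambda>c. cscale c v)"
    then obtain c where y: "y = cscale c v" by blast
    show "y \<in> {y. g y = id y}"
      by (cases "v = 0") (simp_all add: y g_def cinner_cscale_right cinner_self_eq_zero)
  next
    fix y assume "y \<in> {y. g y = id y}"
    hence "y = cscale (cinner v y / cinner v v) v" by (simp add: g_def)
    thus "y \<in> range (\<lambda>c. cscale c v)" by blast
  qed
  ultimately show ?thesis by simp
qed

lemma line_add:
  "x \<in> range (\<lambda>c. cscale c v) \<Longrightarrow> y \<in> range (\<lambda>c. cscale c v) \<Longrightarrow>
    x + y \<in> range (\<lambda>c. cscale c (v::'a::complex_inner))"
  by (auto simp: cscale_add_left[symmetric])

lemma line_cscale:
  "x \<in> range (\<lambda>c. cscale c v) \<Longrightarrow> cscale d x \<in> range (\<lambda>c. cscale c (v::'a::complex_inner))"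
  by (auto simp: cscale_cscale)

lemma cspan_minimal:
  fixes V :: "'a::complex_inner set"
  assumes "S \<subseteq> V" and "0 \<in> V" and "\<And>x y. x \<in> V \<Longrightarrow> y \<in> V \<Longrightarrow> x + y \<in> V"
    and "\<And>c x. x \<in> V \<Longrightarrow> cscale c x \<in> V"
  shows "cspan S \<subseteq> V"
proof
  fix x assume "x \<in> cspan S"
  then obtain F c where x: "x = (\<Sum>a\<in>F. cscale (c a) a)" and F: "finite F" "F \<subseteq> S"
    unfolding cspan_def by blast
  have "(\<Sum>a\<in>F'. cscale (c a) a) \<in> V" if "finite F'" "F' \<subseteq> S" for F'
    using that by (induction F' rule: finite_induct) (use assms in auto)
  thus "x \<in> V" using x F by blast
qed

lemma cspan_cscale:
  assumes "x \<in> cspan S" shows "cscale d x \<in> cspan S"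
proof -
  obtain F c where x: "x = (\<Sum>a\<in>F. cscale (c a) a)" "finite F" "F \<subseteq> S"
    using assms unfolding cspan_def by blast
  hence "cscale d x = (\<Sum>a\<in>F. cscale (d * c a) a)" by (simp add: cscale_sum cscale_cscale)
  with x show ?thesis
    unfolding cspan_def mem_Collect_eq by (intro exI[of _ F] exI[of _ "\<lambda>a. d * c a"]) simp
qed

lemma cspan_add:
  assumes "x \<in> cspan S" "y \<in> cspan S" shows "x + y \<in> cspan S"
proof -
  obtain F1 c1 where x: "x = (\<Sum>a\<in>F1. cscale (c1 a) a)" "finite F1" "F1 \<subseteq> S"
    using assms(1) unfolding cspan_def by blast
  obtain F2 c2 where y: "y = (\<Sum>a\<in>F2. cscale (c2 a) a)" "finite F2" "F2 \<subseteq> S"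
    using assms(2) unfolding cspan_def by blast
  have extend: "(\<Sum>a\<in>F. cscale (c a) a) = (\<Sum>a\<in>F1 \<union> F2. cscale (if a \<in> F then c a else 0) a)"
    if "F \<subseteq> F1 \<union> F2" for F c
    using that x(2) y(2) by (intro sum.mono_neutral_cong_left) auto
  define c where "c a = (if a \<in> F1 then c1 a else 0) + (if a \<in> F2 then c2 a else 0)" for a
  have "x + y = (\<Sum>a\<in>F1 \<union> F2. cscale (c a) a)"
    using extend[of F1 c1] extend[of F2 c2] by (simp add: x(1) y(1) c_def cscale_add_left sum.distrib)
  with x y show ?thesis
    unfolding cspan_def mem_Collect_eq by (intro exI[of _ "F1 \<union> F2"] exI[of _ c]) simp
qed

lemma closure_cspan_add:
  assumes "x \<in> closure (cspan S)" "y \<in> closure (cspan (S::'a::complex_inner set))"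
  shows "x + y \<in> closure (cspan S)"
proof -
  obtain f where f: "\<And>n. f n \<in> cspan S" "f \<longlonglongrightarrow> x"
    using assms(1) unfolding closure_sequential by blast
  obtain g where g: "\<And>n. g n \<in> cspan S" "g \<longlonglongrightarrow> y"
    using assms(2) unfolding closure_sequential by blast
  have "\<forall>n. f n + g n \<in> cspan S" using f g by (blast intro: cspan_add)
  moreover have "(\<lambda>n. f n + g n) \<longlonglongrightarrow> x + y" using f g by (intro tendsto_intros)
  ultimately show ?thesis unfolding closure_sequential by (intro exI[of _ "\<lambda>n. f n + g n"]) simp
qed

lemma closure_cspan_cscale:
  assumes "x \<in> closure (cspan (S::'a::complex_inner set))"
  shows "cscale c x \<in> closure (cspan S)"
proof -
  have "(\<lambda>x. cscale c x) ` closure (cspan S) \<subseteq> closure (cspan S)"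
    by (rule image_closure_subset)
      (auto intro!: linear_continuous_on bounded_linear_cscale_right cspan_cscale
        intro: closure_subset[THEN subsetD])
  thus ?thesis using assms by blast
qed

lemma closure_cspan_zero: "0 \<in> closure (cspan S)"
  by (rule closure_subset[THEN subsetD]) (auto simp: cspan_def intro!: exI[of _ "{}"])

lemma closure_cspan_gen: "a \<in> S \<Longrightarrow> a \<in> closure (cspan S)"
  by (rule closure_subset[THEN subsetD])
    (auto simp: cspan_def cscale_one intro!: exI[of _ "{a}"] exI[of _ "\<lambda>_. 1"])

lemma closure_cspan_sum:
  "(\<And>a. a \<in> F \<Longrightarrow> f a \<in> closure (cspan S)) \<Longrightarrow> sum f F \<in> closure (cspan S)"
  by (induction F rule: infinite_finite_induct) (auto intro: closure_cspan_add closure_cspan_zero)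

lemma closure_cspan_diff:
  "x \<in> closure (cspan S) \<Longrightarrow> y \<in> closure (cspan S) \<Longrightarrow> x - y \<in> closure (cspan S)"
  using closure_cspan_add[of x S "cscale (-1) y"] closure_cspan_cscale[of y S "-1"]
  by (simp add: cscale_minus_one)

lemma has_sum_in_closure_cspan:
  assumes "(f has_sum h) A" and "\<And>a. a \<in> A \<Longrightarrow> f a \<in> closure (cspan S)"
  shows "h \<in> closure (cspan S)"
proof (rule Lim_in_closed_set)
  show "((\<lambda>F. sum f F) \<longlongrightarrow> h) (finite_subsets_at_top A)"
    using assms(1) by (simp add: has_sum_def)
  show "eventually (\<lambda>F. sum f F \<in> closure (cspan S)) (finite_subsets_at_top A)"
    unfolding eventually_finite_subsets_at_top
    by (rule exI[of _ "{}"]) (use assms(2) in \<open>auto intro!: closure_cspan_sum\<close>)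
qed auto

lemma closure_cspan_subset:
  assumes "A \<subseteq> closure (cspan B)"
  shows "closure (cspan A) \<subseteq> closure (cspan B)"
proof -
  have "cspan A \<subseteq> closure (cspan B)"
    by (rule cspan_minimal)
      (use assms in \<open>auto intro: closure_cspan_zero closure_cspan_add closure_cspan_cscale\<close>)
  thus ?thesis by (simp add: closure_minimal)
qed

section \<open>Projection-valued measures\<close>

lemma pvm_projection: "pvm M P \<Longrightarrow> E \<in> sets M \<Longrightarrow> is_projection (P E)"
  unfolding pvm_def by blast

lemma pvm_bounded_clinear: "pvm M P \<Longrightarrow> E \<in> sets M \<Longrightarrow> bounded_clinear (P E)"
  using pvm_projection unfolding is_projection_def by blast

lemma pvm_idem: "pvm M P \<Longrightarrow> E \<in> sets M \<Longrightarrow> P E (P E h) = P E h"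
  using pvm_projection projection_idem by blast

lemma pvm_sums: "pvm M P \<Longrightarrow> range A \<subseteq> sets M \<Longrightarrow> disjoint_family A \<Longrightarrow>
    (\<lambda>i. P (A i) h) sums P (\<Union>i. A i) h"
  unfolding pvm_def by blast

lemma pvm_space: "pvm M P \<Longrightarrow> P (space M) h = h"
  unfolding pvm_def by simp

lemma pvm_empty:
  fixes P :: "'p set \<Rightarrow> 'h::complex_inner \<Rightarrow> 'h"
  assumes "pvm M P" shows "P {} h = 0"
proof -
  have "(\<lambda>i::nat. P {} h) sums P (\<Union>i::nat. {}) h"
    by (rule pvm_sums[OF assms]) (auto simp: disjoint_family_on_def)
  hence "(\<lambda>i::nat. P {} h) \<longlonglongrightarrow> 0" by (intro summable_LIMSEQ_zero sums_summable)
  thus ?thesis by (simp add: LIMSEQ_const_iff)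
qed

lemma pvm_Un:
  fixes P :: "'p set \<Rightarrow> 'h::complex_inner \<Rightarrow> 'h"
  assumes pv: "pvm M P" and AB: "A \<in> sets M" "B \<in> sets M" "A \<inter> B = {}"
  shows "P (A \<union> B) h = P A h + P B h"
proof -
  define F where "F i = (if i = 0 then A else if i = Suc 0 then B else {})" for i :: nat
  have "range F \<subseteq> sets M" "disjoint_family F"
    using AB by (auto simp: F_def disjoint_family_on_def)
  hence "(\<lambda>i. P (F i) h) sums P (\<Union>i. F i) h" by (rule pvm_sums[OF pv])
  moreover have "(\<Union>i. F i) = A \<union> B"
    by (auto simp: F_def split: if_splits intro: UN_I[of 0] UN_I[of "Suc 0"])
  moreover have "(\<lambda>i. P (F i) h) sums (\<Sum>i\<in>{0, Suc 0}. P (F i) h)"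
    by (rule sums_finite) (auto simp: F_def pvm_empty[OF pv])
  ultimately show ?thesis by (simp add: F_def sums_unique2)
qed

text \<open>Disjoint sets give orthogonal ranges: expanding \<open>P(A \<union> B)\<^sup>2 = P(A \<union> B)\<close> shows that
\<open>P A P B\<close> and \<open>P B P A\<close> are negatives of each other, and then that they coincide.\<close>
lemma pvm_disjoint_zero:
  fixes P :: "'p set \<Rightarrow> 'h::complex_inner \<Rightarrow> 'h"
  assumes pv: "pvm M P" and AB: "A \<in> sets M" "B \<in> sets M" "A \<inter> B = {}"
  shows "P A (P B h) = 0"
proof -
  let ?p = "P A" and ?q = "P B"
  have AUB: "A \<union> B \<in> sets M" using AB by auto
  have r: "P (A \<union> B) x = ?p x + ?q x" for x by (rule pvm_Un[OF pv AB])
  have lp: "bounded_clinear ?p" "bounded_clinear ?q" using pvm_bounded_clinear[OF pv] AB by auto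
  have ip: "?p (?p x) = ?p x" "?q (?q x) = ?q x" for x using pvm_idem[OF pv] AB by auto
  have anti: "?p (?q x) + ?q (?p x) = 0" for x
  proof -
    have "P (A \<union> B) (P (A \<union> B) x) = P (A \<union> B) x" by (rule pvm_idem[OF pv AUB])
    hence "?p x + ?p (?q x) + (?q (?p x) + ?q x) = ?p x + ?q x"
      by (simp add: r bounded_clinear_add[OF lp(1)] bounded_clinear_add[OF lp(2)] ip)
    thus ?thesis by (simp add: algebra_simps)
  qed
  have "?p (?q h) + ?p (?q (?p h)) = 0"
    using arg_cong[OF anti[of h], of ?p]
    by (simp add: bounded_clinear_add[OF lp(1)] bounded_clinear_zero[OF lp(1)] ip)
  moreover have "?p (?q (?p h)) + ?q (?p h) = 0"
    using anti[of "?p h"] by (simp add: ip)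
  ultimately have "?p (?q h) = ?q (?p h)"
    by (simp add: eq_neg_iff_add_eq_0[symmetric] add_eq_0_iff)
  hence "scaleR 2 (?p (?q h)) = 0" using anti[of h] by (simp add: scaleR_2)
  thus ?thesis by simp
qed

lemma pvm_Int:
  fixes P :: "'p set \<Rightarrow> 'h::complex_inner \<Rightarrow> 'h"
  assumes pv: "pvm M P" and AB: "A \<in> sets M" "B \<in> sets M"
  shows "P A (P B h) = P (A \<inter> B) h"
proof -
  have S: "A \<inter> B \<in> sets M" "A - B \<in> sets M" "B - A \<in> sets M" using AB by auto
  have u: "A \<inter> B \<union> (A - B) = A" "A \<inter> B \<union> (B - A) = B" by blast+
  have eA: "P A y = P (A \<inter> B) y + P (A - B) y" for y
    using pvm_Un[OF pv S(1) S(2), of y] by (simp only: u) blast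
  have eB: "P B h = P (A \<inter> B) h + P (B - A) h"
    using pvm_Un[OF pv S(1) S(3), of h] by (simp only: u) blast
  have l1: "bounded_clinear (P (A \<inter> B))" "bounded_clinear (P (A - B))"
    using pvm_bounded_clinear[OF pv] S by auto
  have "P (A \<inter> B) (P (B - A) h) = 0" "P (A - B) (P (A \<inter> B) h) = 0" "P (A - B) (P (B - A) h) = 0"
    by (rule pvm_disjoint_zero[OF pv]; use S in auto)+
  thus ?thesis
    by (simp add: eA eB bounded_clinear_add[OF l1(1)] bounded_clinear_add[OF l1(2)] pvm_idem[OF pv S(1)])
qed

lemma pvm_Diff_space:
  fixes P :: "'p set \<Rightarrow> 'h::complex_inner \<Rightarrow> 'h"
  assumes pv: "pvm M P" and A: "A \<in> sets M"
  shows "P (space M - A) h = h - P A h"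
proof -
  have "A \<union> (space M - A) = space M" using sets.sets_into_space[OF A] by auto
  hence "P (space M) h = P A h + P (space M - A) h"
    using pvm_Un[OF pv A, of "space M - A"] A by auto
  thus ?thesis using pvm_space[OF pv] by (simp add: algebra_simps)
qed

lemma pvm_finite_UN:
  fixes P :: "'p set \<Rightarrow> 'h::complex_inner \<Rightarrow> 'h"
  assumes pv: "pvm M P" and "finite I" and "\<And>i. i \<in> I \<Longrightarrow> S i \<in> sets M"
    and "disjoint_family_on S I"
  shows "P (\<Union>i\<in>I. S i) h = (\<Sum>i\<in>I. P (S i) h)"
  using assms(2-)
proof (induction I rule: finite_induct)
  case empty thus ?case by (simp add: pvm_empty[OF pv])
next
  case (insert i I)
  have "S i \<inter> (\<Union>j\<in>I. S j) = {}"
    using insert.prems(2) insert.hyps(2) by (auto simp: disjoint_family_on_def)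
  moreover have "(\<Union>j\<in>I. S j) \<in> sets M" using insert.prems(1) insert.hyps(1) by auto
  ultimately have "P (S i \<union> (\<Union>j\<in>I. S j)) h = P (S i) h + P (\<Union>j\<in>I. S j) h"
    using pvm_Un[OF pv] insert.prems(1) by auto
  moreover have "disjoint_family_on S I"
    using insert.prems(2) by (auto simp: disjoint_family_on_def)
  ultimately show ?case using insert by simp
qed

lemma pvm_atom_range_subset_line:
  fixes P :: "'p set \<Rightarrow> 'h::chilbert_space \<Rightarrow> 'h"
  assumes pv: "pvm M P" and cyc: "closure (cspan {P E \<xi> | E. E \<in> sets M}) = UNIV"
    and x: "{x} \<in> sets M"
  shows "range (P {x}) \<subseteq> range (\<lambda>c. cscale c (P {x} \<xi>))"
proof -
  let ?L = "range (\<lambda>c. cscale c (P {x} \<xi>))"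
  have bcl: "bounded_clinear (P {x})" using pvm_bounded_clinear[OF pv x] .
  have gen: "P {x} (P E \<xi>) \<in> ?L" if E: "E \<in> sets M" for E
  proof -
    have "P {x} (P E \<xi>) = P ({x} \<inter> E) \<xi>" by (rule pvm_Int[OF pv x E])
    also have "\<dots> = (if x \<in> E then cscale 1 (P {x} \<xi>) else cscale 0 (P {x} \<xi>))"
      by (simp add: cscale_one pvm_empty[OF pv])
    finally show ?thesis by (metis rangeI)
  qed
  have "cspan {P E \<xi> | E. E \<in> sets M} \<subseteq> P {x} -` ?L"
  proof (rule cspan_minimal)
    show "0 \<in> P {x} -` ?L"
      using bounded_clinear_zero[OF bcl] by (auto intro: range_eqI[of _ _ 0])
  qed (use gen in \<open>auto simp: bounded_clinear_add[OF bcl] bounded_clinear_cscale[OF bcl]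
      intro: line_add line_cscale\<close>)
  hence "P {x} ` cspan {P E \<xi> | E. E \<in> sets M} \<subseteq> ?L" by blast
  hence "P {x} ` closure (cspan {P E \<xi> | E. E \<in> sets M}) \<subseteq> ?L"
    by (intro image_closure_subset)
      (auto intro!: linear_continuous_on bounded_clinear_imp_bounded_linear[OF bcl] closed_line)
  thus ?thesis using cyc by simp
qed

lemma pvm_cyclic_atom_nonzero:
  fixes P :: "'p set \<Rightarrow> 'h::chilbert_space \<Rightarrow> 'h"
  assumes pv: "pvm M P" and cyc: "closure (cspan {P E \<xi> | E. E \<in> sets M}) = UNIV"
    and x: "is_atom M P x"
  shows "P {x} \<xi> \<noteq> 0"
proof
  assume "P {x} \<xi> = 0"
  hence "P {x} h = 0" for h
    using pvm_atom_range_subset_line[OF pv cyc, of x] x by (auto simp: is_atom_def)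
  thus False using x by (auto simp: is_atom_def)
qed

lemma pvm_cyclic_atom_rank_one:
  fixes P :: "'p set \<Rightarrow> 'h::chilbert_space \<Rightarrow> 'h"
  assumes pv: "pvm M P" and cyc: "closure (cspan {P E \<xi> | E. E \<in> sets M}) = UNIV"
    and x: "is_atom M P x"
  shows "rank_one (P {x})"
proof -
  have sx: "{x} \<in> sets M" using x by (simp add: is_atom_def)
  have "range (\<lambda>c. cscale c (P {x} \<xi>)) \<subseteq> range (P {x})"
    using bounded_clinear_cscale[OF pvm_bounded_clinear[OF pv sx]] by (metis image_subsetI rangeI)
  hence "range (P {x}) = range (\<lambda>c. cscale c (P {x} \<xi>))"
    using pvm_atom_range_subset_line[OF pv cyc sx] by blast
  thus ?thesis unfolding rank_one_def using pvm_cyclic_atom_nonzero[OF pv cyc x] by blast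
qed

text \<open>Each \<open>h\<close> has only countably many nonzero components \<open>P{\<omega>} h\<close>, since
\<open>\<parallel>P{\<omega>} h\<parallel>\<^sup>2 = Re \<langle>h, P{\<omega>} h\<rangle>\<close> is summable; a countable dense set detects every atom.\<close>
lemma countable_atoms_of_separable:
  fixes P :: "'p set \<Rightarrow> 'h::chilbert_space \<Rightarrow> 'h"
  assumes sep: "separable_type TYPE('h)" and pv: "pvm M P"
    and atoms: "\<And>\<omega>. \<omega> \<in> \<Omega> \<Longrightarrow> {\<omega>} \<in> sets M \<and> P {\<omega>} \<noteq> (\<lambda>_. 0)"
    and hs: "\<And>h. ((\<lambda>\<omega>. P {\<omega>} h) has_sum h) \<Omega>"
  shows "countable \<Omega>"
proof -
  obtain D :: "'h set" where D: "countable D" "closure D = UNIV"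
    using sep unfolding separable_type_def by blast
  have support: "countable {\<omega>\<in>\<Omega>. P {\<omega>} d \<noteq> 0}" for d
  proof -
    have "(\<lambda>\<omega>. Re (cinner d (P {\<omega>} d))) summable_on \<Omega>"
      using has_sum_bounded_linear[OF bounded_linear_Re_cinner_right hs[of d]]
      unfolding summable_on_def by blast
    hence "countable {\<omega>\<in>\<Omega>. Re (cinner d (P {\<omega>} d)) \<noteq> 0}" by (rule summable_countable_real)
    moreover have "Re (cinner d (P {\<omega>} d)) = (norm (P {\<omega>} d))\<^sup>2" if "\<omega> \<in> \<Omega>" for \<omega>
      using cinner_projection_self[OF pvm_projection[OF pv conjunct1[OF atoms[OF that]]], of d]
      by simp
    ultimately show ?thesis by (auto elim!: countable_subset[rotated])
  qed
  have "\<exists>d\<in>D. P {\<omega>} d \<noteq> 0" if w: "\<omega> \<in> \<Omega>" for \<omega>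
  proof -
    have bcl: "bounded_clinear (P {\<omega>})" using pvm_bounded_clinear[OF pv] atoms[OF w] by blast
    have "closed {h. P {\<omega>} h = 0}"
      using closed_Collect_eq[of "P {\<omega>}" "\<lambda>_. 0"]
      by (auto intro: linear_continuous_on bounded_clinear_imp_bounded_linear[OF bcl])
    hence "open (- {h. P {\<omega>} h = 0})" by (simp add: open_Compl)
    moreover have "- {h. P {\<omega>} h = 0} \<noteq> {}" using atoms[OF w] by auto
    ultimately have "- {h. P {\<omega>} h = 0} \<inter> D \<noteq> {}"
      using D(2) open_Int_closure_eq_empty[of _ D] by auto
    thus ?thesis by auto
  qed
  hence "\<Omega> \<subseteq> (\<Union>d\<in>D. {\<omega>\<in>\<Omega>. P {\<omega>} d \<noteq> 0})" by blast
  thus ?thesis by (rule countable_subset) (use D(1) support in blast)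
qed

lemma pvm_singleton_fixed:
  fixes P :: "'p set \<Rightarrow> 'h::complex_inner \<Rightarrow> 'h"
  assumes pv: "pvm M P" and "{x} \<in> sets M" "{y} \<in> sets M" and v: "P {y} v = v"
  shows "P {x} v = (if y = x then v else 0)"
proof -
  have "P {x} v = P ({x} \<inter> {y}) v" using pvm_Int[OF pv assms(2,3), of v] by (simp only: v)
  thus ?thesis using v by (cases "y = x") (simp_all add: pvm_empty[OF pv])
qed

text \<open>The vector \<open>\<Sum>\<^sub>n 2\<^sup>-\<^sup>n u(\<omega>\<^sub>n)\<close> for an enumeration \<open>\<omega>\<^sub>n\<close> of \<open>\<Omega>\<close>.\<close>
lemma exists_vector_charging_atoms:
  fixes P :: "'p set \<Rightarrow> 'h::chilbert_space \<Rightarrow> 'h"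
  assumes pv: "pvm M P" and cnt: "countable \<Omega>" and atoms: "\<And>\<omega>. \<omega> \<in> \<Omega> \<Longrightarrow> {\<omega>} \<in> sets M"
    and u: "\<And>\<omega>. \<omega> \<in> \<Omega> \<Longrightarrow> norm (u \<omega>) = 1 \<and> P {\<omega>} (u \<omega>) = u \<omega>"
  shows "\<exists>\<xi>. \<forall>\<omega>\<in>\<Omega>. \<exists>r. r \<noteq> 0 \<and> P {\<omega>} \<xi> = scaleR r (u \<omega>)"
proof -
  define e where "e = to_nat_on \<Omega>"
  have einj: "inj_on e \<Omega>" unfolding e_def by (rule inj_on_to_nat_on[OF cnt])
  have einv: "\<And>\<omega>. \<omega> \<in> \<Omega> \<Longrightarrow> from_nat_into \<Omega> (e \<omega>) = \<omega>" using cnt by (simp add: e_def)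
  define f where "f n = (if n \<in> e ` \<Omega> then scaleR ((1/2)^n) (u (from_nat_into \<Omega> n)) else 0)" for n
  have "norm (f n) \<le> (1/2)^n" for n
    by (cases "n \<in> e ` \<Omega>") (auto simp: f_def einv u)
  hence sf: "summable f"
    by (intro summable_comparison_test[OF _ summable_geometric[of "1/2::real"]]) auto
  have charge: "P {\<omega>} (suminf f) = scaleR ((1/2)^(e \<omega>)) (u \<omega>)" if w: "\<omega> \<in> \<Omega>" for \<omega>
  proof -
    have bcl: "bounded_clinear (P {\<omega>})" using pvm_bounded_clinear[OF pv atoms[OF w]] .
    have Pu: "P {\<omega>} (u \<omega>') = (if \<omega>' = \<omega> then u \<omega>' else 0)" if w': "\<omega>' \<in> \<Omega>" for \<omega>'
      by (rule pvm_singleton_fixed[OF pv atoms[OF w] atoms[OF w'] conjunct2[OF u[OF w']]])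
    have "P {\<omega>} (f n) = (if n = e \<omega> then f n else 0)" for n
    proof (cases "n \<in> e ` \<Omega>")
      case True
      then obtain \<omega>' where "\<omega>' \<in> \<Omega>" "n = e \<omega>'" by blast
      thus ?thesis using w einj Pu
        by (auto simp: f_def einv scaleR_cscale bounded_clinear_cscale[OF bcl] dest: inj_onD)
    next
      case False
      thus ?thesis using w by (auto simp: f_def bounded_clinear_zero[OF bcl])
    qed
    hence "P {\<omega>} (suminf f) = (\<Sum>n. if n = e \<omega> then f n else 0)"
      using bounded_linear.suminf[OF bounded_clinear_imp_bounded_linear[OF bcl] sf] by simp
    also have "\<dots> = f (e \<omega>)" by (rule sums_unique[symmetric, OF sums_single])
    finally show ?thesis using w by (auto simp: f_def einv)
  qed
  show ?thesis
  proof (rule exI[of _ "suminf f"], intro ballI)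
    fix \<omega> assume "\<omega> \<in> \<Omega>"
    thus "\<exists>r. r \<noteq> 0 \<and> P {\<omega>} (suminf f) = scaleR r (u \<omega>)"
      using charge by (intro exI[of _ "(1/2)^e \<omega>"]) simp
  qed
qed

lemma pvm_cyclic_of_rank_one_atoms:
  fixes P :: "'p set \<Rightarrow> 'h::chilbert_space \<Rightarrow> 'h"
  assumes sep: "separable_type TYPE('h)" and pv: "pvm M P" and pa: "purely_atomic_pvm M P"
    and rank_one: "\<forall>x. is_atom M P x \<longrightarrow> rank_one (P {x})"
  shows "\<exists>\<xi>. closure (cspan {P E \<xi> | E. E \<in> sets M}) = UNIV"
proof -
  obtain \<Omega> where \<Omega>: "\<Omega> \<in> sets M"
    and atoms: "\<And>\<omega>. \<omega> \<in> \<Omega> \<Longrightarrow> {\<omega>} \<in> sets M \<and> P {\<omega>} \<noteq> (\<lambda>_. 0)"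
    and hs: "\<And>h. ((\<lambda>\<omega>. P {\<omega>} h) has_sum h) \<Omega>"
    using pa unfolding purely_atomic_pvm_def by blast
  have "\<exists>u. norm u = 1 \<and> P {\<omega>} u = u \<and> (\<forall>h. \<exists>c. P {\<omega>} h = cscale c u)" if w: "\<omega> \<in> \<Omega>" for \<omega>
  proof (rule rank_one_projection_unit_vector)
    show "is_projection (P {\<omega>})" using pvm_projection[OF pv] atoms[OF w] by blast
    have "\<omega> \<in> space M" using sets.sets_into_space[OF \<Omega>] w by blast
    thus "rank_one (P {\<omega>})" using rank_one atoms[OF w] by (simp add: is_atom_def)
  qed
  then obtain u where u: "\<And>\<omega>. \<omega> \<in> \<Omega> \<Longrightarrow> norm (u \<omega>) = 1 \<and> P {\<omega>} (u \<omega>) = u \<omega>"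
    and u_span: "\<And>\<omega> h. \<omega> \<in> \<Omega> \<Longrightarrow> \<exists>c. P {\<omega>} h = cscale c (u \<omega>)"
    by metis
  have "countable \<Omega>" by (rule countable_atoms_of_separable[OF sep pv atoms hs])
  then obtain \<xi> where \<xi>: "\<And>\<omega>. \<omega> \<in> \<Omega> \<Longrightarrow> \<exists>r. r \<noteq> 0 \<and> P {\<omega>} \<xi> = scaleR r (u \<omega>)"
    using exists_vector_charging_atoms[OF pv _ _ u] atoms by metis
  define S where "S = closure (cspan {P E \<xi> | E. E \<in> sets M})"
  have atom_in_S: "P {\<omega>} h \<in> S" if w: "\<omega> \<in> \<Omega>" for \<omega> h
  proof -
    obtain r where r: "r \<noteq> 0" "P {\<omega>} \<xi> = scaleR r (u \<omega>)" using \<xi>[OF w] by blast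
    have "P {\<omega>} \<xi> \<in> S" unfolding S_def using atoms[OF w] by (blast intro: closure_cspan_gen)
    hence "cscale (of_real (inverse r)) (P {\<omega>} \<xi>) \<in> S" unfolding S_def by (rule closure_cspan_cscale)
    hence "u \<omega> \<in> S" using r by (simp add: scaleR_cscale cscale_cscale cscale_one)
    moreover obtain c where "P {\<omega>} h = cscale c (u \<omega>)" using u_span[OF w] by blast
    ultimately show ?thesis unfolding S_def by (simp add: closure_cspan_cscale)
  qed
  have "h \<in> S" for h
    using hs[of h] atom_in_S unfolding S_def by (rule has_sum_in_closure_cspan)
  thus ?thesis unfolding S_def by blast
qed

lemma purely_atomic_measure_of_pvm:
  fixes P :: "'p set \<Rightarrow> 'h::chilbert_space \<Rightarrow> 'h"
  assumes pv: "pvm M P" and pa: "purely_atomic_pvm M P"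
    and cyc: "closure (cspan {P E \<xi> | E. E \<in> sets M}) = UNIV"
    and sets_\<mu>: "sets \<mu> = sets M"
    and emeasure_\<mu>: "\<And>E. E \<in> sets M \<Longrightarrow> emeasure \<mu> E = ennreal ((norm (P E \<xi>))\<^sup>2)"
  shows "purely_atomic_measure \<mu>"
proof -
  obtain \<Omega> where \<Omega>: "\<Omega> \<in> sets M" "P (space M - \<Omega>) = (\<lambda>_. 0)"
    and atoms: "\<And>\<omega>. \<omega> \<in> \<Omega> \<Longrightarrow> {\<omega>} \<in> sets M \<and> P {\<omega>} \<noteq> (\<lambda>_. 0)"
    using pa unfolding purely_atomic_pvm_def by blast
  have space_\<mu>: "space \<mu> = space M" by (rule sets_eq_imp_space_eq[OF sets_\<mu>])
  show ?thesis unfolding purely_atomic_measure_def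
  proof (intro bexI conjI ballI)
    show "emeasure \<mu> (space \<mu> - \<Omega>) = 0"
      using emeasure_\<mu>[of "space M - \<Omega>"] \<Omega> by (simp add: space_\<mu>)
    fix \<omega> assume w: "\<omega> \<in> \<Omega>"
    show "{\<omega>} \<in> sets \<mu>" using atoms[OF w] sets_\<mu> by simp
    have "is_atom M P \<omega>"
      using atoms[OF w] sets.sets_into_space[OF \<Omega>(1)] w by (auto simp: is_atom_def)
    hence "P {\<omega>} \<xi> \<noteq> 0" by (rule pvm_cyclic_atom_nonzero[OF pv cyc])
    thus "emeasure \<mu> {\<omega>} \<noteq> 0" using emeasure_\<mu>[of "{\<omega>}"] atoms[OF w] by simp
  qed (use \<Omega> sets_\<mu> in simp)
qed

section \<open>The path space\<close>

abbreviation zk :: "'k \<Rightarrow> nat" where "zk \<equiv> (\<lambda>_. 0)"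

lemma inf_path_mor: "x \<in> inf_paths G \<Longrightarrow> m \<le> n \<Longrightarrow> x m n \<in> mor G \<and> deg G (x m n) = (\<lambda>i. n i - m i)"
  unfolding inf_paths_def by blast

lemma inf_path_comp: "x \<in> inf_paths G \<Longrightarrow> m \<le> n \<Longrightarrow> n \<le> p \<Longrightarrow>
    src G (x m n) = rng G (x n p) \<and> comp G (x m n) (x n p) = x m p"
  unfolding inf_paths_def by blast

lemma inf_path_initial: "x \<in> inf_paths G \<Longrightarrow> x zk n \<in> mor G \<and> deg G (x zk n) = n"
  using inf_path_mor[of x G zk n] by (simp add: le_fun_def)

lemma kgraph_unique_factorisation:
  assumes "is_kgraph G" and "l \<in> mor G" and "deg G l = (\<lambda>i. p i + q i)"
  shows "\<exists>!(a, b). a \<in> mor G \<and> b \<in> mor G \<and> src G a = rng G b \<and>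
                  deg G a = p \<and> deg G b = q \<and> comp G a b = l"
proof -
  have "\<forall>l\<in>mor G. \<forall>p q. deg G l = (\<lambda>i. p i + q i) \<longrightarrow>
         (\<exists>!(a, b). a \<in> mor G \<and> b \<in> mor G \<and> src G a = rng G b \<and>
                    deg G a = p \<and> deg G b = q \<and> comp G a b = l)"
    using assms(1) unfolding is_kgraph_def by blast
  from this[rule_format, OF assms(2,3)] show ?thesis .
qed

lemma inf_path_initial_unique:
  assumes kg: "is_kgraph G" and x: "x \<in> inf_paths G" and y: "y \<in> inf_paths G"
    and nm: "n \<le> m" and eq: "x zk m = y zk m"
  shows "x zk n = y zk n"
proof -
  define l where "l = x zk m"
  have l: "l \<in> mor G" "deg G l = (\<lambda>i. n i + (m i - n i))"
    using inf_path_initial[OF x, of m] nm by (auto simp: l_def le_fun_def)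
  have zn: "zk \<le> n" by (simp add: le_fun_def)
  have "\<exists>!(a, b). a \<in> mor G \<and> b \<in> mor G \<and> src G a = rng G b \<and>
                  deg G a = n \<and> deg G b = (\<lambda>i. m i - n i) \<and> comp G a b = l"
    by (rule kgraph_unique_factorisation[OF kg l])
  moreover have "x zk n \<in> mor G \<and> x n m \<in> mor G \<and> src G (x zk n) = rng G (x n m) \<and>
       deg G (x zk n) = n \<and> deg G (x n m) = (\<lambda>i. m i - n i) \<and> comp G (x zk n) (x n m) = l"
    using inf_path_initial[OF x] inf_path_mor[OF x nm] inf_path_comp[OF x zn nm] by (simp add: l_def)
  moreover have "y zk n \<in> mor G \<and> y n m \<in> mor G \<and> src G (y zk n) = rng G (y n m) \<and>
       deg G (y zk n) = n \<and> deg G (y n m) = (\<lambda>i. m i - n i) \<and> comp G (y zk n) (y n m) = l"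
    using inf_path_initial[OF y] inf_path_mor[OF y nm] inf_path_comp[OF y zn nm] by (simp add: l_def eq)
  ultimately have "(x zk n, x n m) = (y zk n, y n m)" by (auto dest: ex1_implies_ex)
  thus ?thesis by simp
qed

definition prefix_sets :: "('a, 'k) kgraph \<Rightarrow> (('k \<Rightarrow> nat) \<Rightarrow> ('k \<Rightarrow> nat) \<Rightarrow> 'a) set set" where
  "prefix_sets G = {{x \<in> inf_paths G. x zk n \<in> F} | n F. F \<subseteq> {l \<in> mor G. deg G l = n}}"

lemma prefix_set_eq_UN_cyl:
  assumes "F \<subseteq> {l \<in> mor G. deg G l = n}"
  shows "{x \<in> inf_paths G. x zk n \<in> F} = (\<Union>l\<in>F. cyl G l)"
proof (intro equalityI subsetI)
  fix x assume x: "x \<in> {x \<in> inf_paths G. x zk n \<in> F}"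
  hence "x \<in> cyl G (x zk n)" using assms by (auto simp: cyl_def)
  thus "x \<in> (\<Union>l\<in>F. cyl G l)" using x by blast
next
  fix x assume "x \<in> (\<Union>l\<in>F. cyl G l)"
  then obtain l where "l \<in> F" "x \<in> cyl G l" by blast
  thus "x \<in> {x \<in> inf_paths G. x zk n \<in> F}" using assms by (auto simp: cyl_def)
qed

lemma disjoint_family_on_cyl:
  assumes "F \<subseteq> {l \<in> mor G. deg G l = n}"
  shows "disjoint_family_on (cyl G) F"
  using assms unfolding disjoint_family_on_def cyl_def by (auto simp: subset_iff)

lemma Int_stable_prefix_sets:
  assumes kg: "is_kgraph G"
  shows "Int_stable (prefix_sets G)"
proof (rule Int_stableI)
  fix a b assume "a \<in> prefix_sets G" "b \<in> prefix_sets G"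
  then obtain n F n' F' where a: "a = {x \<in> inf_paths G. x zk n \<in> F}"
    and b: "b = {x \<in> inf_paths G. x zk n' \<in> F'}"
    unfolding prefix_sets_def by blast
  define m where "m = (\<lambda>i. max (n i) (n' i))"
  have nm: "n \<le> m" "n' \<le> m" by (auto simp: m_def le_fun_def)
  define F'' where "F'' = {l \<in> mor G. deg G l = m \<and> (\<exists>y\<in>a \<inter> b. y zk m = l)}"
  \<comment> \<open>membership in \<open>a \<inter> b\<close> only depends on the initial segment of degree \<open>m\<close>\<close>
  have "a \<inter> b = {x \<in> inf_paths G. x zk m \<in> F''}"
  proof
    show "a \<inter> b \<subseteq> {x \<in> inf_paths G. x zk m \<in> F''}"
      using inf_path_initial by (auto simp: F''_def a b)
    show "{x \<in> inf_paths G. x zk m \<in> F''} \<subseteq> a \<inter> b"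
    proof
      fix x assume "x \<in> {x \<in> inf_paths G. x zk m \<in> F''}"
      then obtain y where x: "x \<in> inf_paths G" and y: "y \<in> a \<inter> b" and e: "x zk m = y zk m"
        by (auto simp: F''_def)
      have yp: "y \<in> inf_paths G" using y by (auto simp: a)
      have "x zk n = y zk n" "x zk n' = y zk n'"
        using inf_path_initial_unique[OF kg x yp _ e] nm by blast+
      thus "x \<in> a \<inter> b" using x y by (auto simp: a b)
    qed
  qed
  moreover have "F'' \<subseteq> {l \<in> mor G. deg G l = m}" by (auto simp: F''_def)
  ultimately show "a \<inter> b \<in> prefix_sets G" unfolding prefix_sets_def by blast
qed

lemma sets_path_space: "sets (path_space G) = sigma_sets (inf_paths G) (cyl G ` mor G)"
  unfolding path_space_def by (rule sets_measure_of) (auto simp: cyl_def)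

lemma space_path_space: "space (path_space G) = inf_paths G"
  unfolding path_space_def by (rule space_measure_of) (auto simp: cyl_def)

lemma cyl_in_sets: "l \<in> mor G \<Longrightarrow> cyl G l \<in> sets (path_space G)"
  unfolding sets_path_space by auto

lemma finite_deg_slice: "finite_kgraph G \<Longrightarrow> F \<subseteq> {l \<in> mor G. deg G l = n} \<Longrightarrow> finite F"
  unfolding finite_kgraph_def by (meson finite_subset)

lemma sigma_sets_prefix_sets:
  assumes fin: "finite_kgraph G"
  shows "sigma_sets (inf_paths G) (prefix_sets G) = sets (path_space G)"
proof
  have "prefix_sets G \<subseteq> sets (path_space G)"
  proof
    fix a assume "a \<in> prefix_sets G"
    then obtain n F where a: "a = {x \<in> inf_paths G. x zk n \<in> F}"
      and F: "F \<subseteq> {l \<in> mor G. deg G l = n}"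
      unfolding prefix_sets_def by blast
    show "a \<in> sets (path_space G)"
      unfolding a prefix_set_eq_UN_cyl[OF F]
      using finite_deg_slice[OF fin F] F by (intro sets.finite_UN) (auto intro: cyl_in_sets)
  qed
  thus "sigma_sets (inf_paths G) (prefix_sets G) \<subseteq> sets (path_space G)"
    using sets.sigma_sets_subset[of "prefix_sets G" "path_space G"] by (simp add: space_path_space)
  have "cyl G l \<in> prefix_sets G" if "l \<in> mor G" for l
  proof -
    have "cyl G l = {x \<in> inf_paths G. x zk (deg G l) \<in> {l}}" by (auto simp: cyl_def)
    thus ?thesis using that unfolding prefix_sets_def by blast
  qed
  thus "sets (path_space G) \<subseteq> sigma_sets (inf_paths G) (prefix_sets G)"
    unfolding sets_path_space by (intro sigma_sets_mono) auto
qed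

lemma path_space_induct[consumes 3, case_names prefix empty compl union]:
  assumes kg: "is_kgraph G" and fin: "finite_kgraph G" and E: "E \<in> sets (path_space G)"
    and prefix: "\<And>n F. F \<subseteq> {l \<in> mor G. deg G l = n} \<Longrightarrow> Q (\<Union>l\<in>F. cyl G l)"
    and empty: "Q {}"
    and compl: "\<And>A. A \<in> sets (path_space G) \<Longrightarrow> Q A \<Longrightarrow> Q (inf_paths G - A)"
    and union: "\<And>A. disjoint_family A \<Longrightarrow> range A \<subseteq> sets (path_space G) \<Longrightarrow>
      (\<And>i. Q (A i)) \<Longrightarrow> Q (\<Union>i::nat. A i)"
  shows "Q E"
proof -
  have sub: "prefix_sets G \<subseteq> Pow (inf_paths G)" by (auto simp: prefix_sets_def)
  have "E \<in> sigma_sets (inf_paths G) (prefix_sets G)"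
    using E sigma_sets_prefix_sets[OF fin] by simp
  with Int_stable_prefix_sets[OF kg] sub show ?thesis
  proof (induction rule: sigma_sets_induct_disjoint)
    case (basic A)
    then obtain n F where "A = {x \<in> inf_paths G. x zk n \<in> F}" "F \<subseteq> {l \<in> mor G. deg G l = n}"
      unfolding prefix_sets_def by blast
    thus ?case using prefix[of F n] prefix_set_eq_UN_cyl[of F G n] by simp
  next
    case empty show ?case by (rule \<open>Q {}\<close>)
  next
    case (compl A) thus ?case using assms(6) sigma_sets_prefix_sets[OF fin] by simp
  next
    case (union A) thus ?case using assms(7) sigma_sets_prefix_sets[OF fin] by simp
  qed
qed

lemma inf_paths_eq_UN_cyl_vertices: "inf_paths G = (\<Union>l\<in>{l \<in> mor G. deg G l = zk}. cyl G l)"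
  using prefix_set_eq_UN_cyl[of "{l \<in> mor G. deg G l = zk}" G zk] inf_path_initial[of _ G zk] by auto

lemma pvm_UN_cyl:
  fixes P :: "(('k \<Rightarrow> nat) \<Rightarrow> ('k \<Rightarrow> nat) \<Rightarrow> 'a) set \<Rightarrow> 'h::complex_inner \<Rightarrow> 'h"
  assumes pv: "pvm (path_space G) P" and fin: "finite_kgraph G"
    and F: "F \<subseteq> {l \<in> mor G. deg G l = n}"
  shows "P (\<Union>l\<in>F. cyl G l) h = (\<Sum>l\<in>F. P (cyl G l) h)"
  using F by (intro pvm_finite_UN[OF pv finite_deg_slice[OF fin F]] disjoint_family_on_cyl)
    (auto intro: cyl_in_sets)

lemma closure_cspan_cyl_eq:
  fixes P :: "(('k::finite \<Rightarrow> nat) \<Rightarrow> ('k \<Rightarrow> nat) \<Rightarrow> 'a) set \<Rightarrow> 'h::complex_inner \<Rightarrow> 'h"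
  assumes kg: "is_kgraph G" and fin: "finite_kgraph G" and pv: "pvm (path_space G) P"
  shows "closure (cspan {P (cyl G l) \<xi> | l. l \<in> mor G}) =
    closure (cspan {P E \<xi> | E. E \<in> sets (path_space G)})"
proof (rule antisym)
  show "closure (cspan {P (cyl G l) \<xi> | l. l \<in> mor G}) \<subseteq>
      closure (cspan {P E \<xi> | E. E \<in> sets (path_space G)})"
    by (rule closure_cspan_subset) (blast intro: closure_cspan_gen cyl_in_sets)
  define S where "S = closure (cspan {P (cyl G l) \<xi> | l. l \<in> mor G})"
  have prefix_in_S: "P (\<Union>l\<in>F. cyl G l) \<xi> \<in> S" if F: "F \<subseteq> {l \<in> mor G. deg G l = n}" for n F
    unfolding S_def pvm_UN_cyl[OF pv fin F]
    by (rule closure_cspan_sum) (use F in \<open>blast intro: closure_cspan_gen\<close>)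
  have "P (inf_paths G) \<xi> \<in> S"
    using prefix_in_S[of "{l \<in> mor G. deg G l = zk}" zk] inf_paths_eq_UN_cyl_vertices[of G]
    by simp
  hence "\<xi> \<in> S" using pvm_space[OF pv, of \<xi>] by (simp add: space_path_space)
  have "P E \<xi> \<in> S" if E: "E \<in> sets (path_space G)" for E
    using kg fin E
  proof (induction rule: path_space_induct)
    case (prefix n F) thus ?case by (rule prefix_in_S)
  next
    case empty show ?case unfolding S_def by (simp add: pvm_empty[OF pv] closure_cspan_zero)
  next
    case (compl A)
    have "P (inf_paths G - A) \<xi> = \<xi> - P A \<xi>"
      using pvm_Diff_space[OF pv compl(1), of \<xi>] by (simp add: space_path_space)
    thus ?case using \<open>\<xi> \<in> S\<close> compl(2) unfolding S_def by (simp add: closure_cspan_diff)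
  next
    case (union A)
    have lim: "(\<lambda>n. \<Sum>i<n. P (A i) \<xi>) \<longlonglongrightarrow> P (\<Union>i. A i) \<xi>"
      using pvm_sums[OF pv union(2,1)] by (simp add: sums_def)
    have "(\<Sum>i<n. P (A i) \<xi>) \<in> S" for n
      using union(3) unfolding S_def by (intro closure_cspan_sum)
    thus ?case by (intro closed_sequentially[OF _ _ lim]) (simp_all add: S_def)
  qed
  thus "closure (cspan {P E \<xi> | E. E \<in> sets (path_space G)}) \<subseteq> S"
    unfolding S_def by (intro closure_cspan_subset) blast
qed

lemma cyclic_vector_iff_pvm_cyclic:
  assumes kg: "is_kgraph G" and fin: "finite_kgraph G" and rep: "pvm_of_rep G t P"
  shows "cyclic_vector G t \<xi> \<longleftrightarrow> closure (cspan {P E \<xi> | E. E \<in> sets (path_space G)}) = UNIV"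
proof -
  have "{t l (adj (t l) \<xi>) | l. l \<in> mor G} = {P (cyl G l) \<xi> | l. l \<in> mor G}"
    using rep unfolding pvm_of_rep_def by force
  moreover have "pvm (path_space G) P" using rep by (simp add: pvm_of_rep_def)
  ultimately show ?thesis
    unfolding cyclic_vector_def by (simp add: closure_cspan_cyl_eq[OF kg fin])
qed

text \<open>A Dynkin argument: both sides are countably additive, finite on \<open>\<Lambda>\<^sup>\<infinity>\<close>, and agree on
finite unions of cylinders of equal degree, an \<open>\<inter>\<close>-stable generator.\<close>
lemma emeasure_eq_pvm_form:
  fixes P :: "(('k::finite \<Rightarrow> nat) \<Rightarrow> ('k \<Rightarrow> nat) \<Rightarrow> 'a) set \<Rightarrow> 'h::chilbert_space \<Rightarrow> 'h"
  assumes kg: "is_kgraph G" and fin: "finite_kgraph G" and pv: "pvm (path_space G) P"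
    and sets_\<mu>: "sets \<mu> = sets (path_space G)"
    and emeasure_prefix: "\<And>n F. F \<subseteq> {l \<in> mor G. deg G l = n} \<Longrightarrow>
      emeasure \<mu> (\<Union>l\<in>F. cyl G l) = ennreal (Re (cinner \<xi> (P (\<Union>l\<in>F. cyl G l) \<xi>)))"
    and E: "E \<in> sets (path_space G)"
  shows "emeasure \<mu> E = ennreal (Re (cinner \<xi> (P E \<xi>)))"
proof -
  define r where "r E = Re (cinner \<xi> (P E \<xi>))" for E
  have r_nonneg: "0 \<le> r E" if "E \<in> sets (path_space G)" for E
    using cinner_projection_self[OF pvm_projection[OF pv that], of \<xi>] by (simp add: r_def)
  have space: "inf_paths G \<in> sets (path_space G)"
    using sets.top[of "path_space G"] by (simp add: space_path_space)
  have emeasure_space: "emeasure \<mu> (inf_paths G) = ennreal (r (inf_paths G))"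
    using emeasure_prefix[of "{l \<in> mor G. deg G l = zk}" zk]
    by (simp add: r_def flip: inf_paths_eq_UN_cyl_vertices)
  show ?thesis
    using kg fin E unfolding r_def[symmetric]
  proof (induction rule: path_space_induct)
    case (prefix n F) thus ?case unfolding r_def by (rule emeasure_prefix)
  next
    case empty show ?case by (simp add: r_def pvm_empty[OF pv])
  next
    case (compl A)
    have "emeasure \<mu> (inf_paths G - A) = emeasure \<mu> (inf_paths G) - emeasure \<mu> A"
      using compl sets.sets_into_space[OF compl(1)] space
      by (intro emeasure_Diff) (auto simp: sets_\<mu> space_path_space)
    also have "\<dots> = ennreal (r (inf_paths G) - r A)"
      using emeasure_space compl r_nonneg[OF compl(1)] by (simp add: ennreal_minus)
    also have "r (inf_paths G) - r A = r (inf_paths G - A)"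
      using pvm_Diff_space[OF pv compl(1), of \<xi>] pvm_space[OF pv, of \<xi>]
      by (simp add: r_def space_path_space cinner_diff_right)
    finally show ?case .
  next
    case (union A)
    have sums: "(\<lambda>i. r (A i)) sums r (\<Union>i. A i)" unfolding r_def
      by (rule bounded_linear.sums[OF bounded_linear_Re_cinner_right pvm_sums[OF pv union(2,1)]])
    have "emeasure \<mu> (\<Union>i. A i) = (\<Sum>i. emeasure \<mu> (A i))"
      using union(1,2) by (intro suminf_emeasure[symmetric]) (auto simp: sets_\<mu>)
    also have "\<dots> = (\<Sum>i. ennreal (r (A i)))" using union(3) by simp
    also have "\<dots> = ennreal (\<Sum>i. r (A i))"
      using union(2) r_nonneg by (intro suminf_ennreal2 sums_summable[OF sums]) auto
    also have "(\<Sum>i. r (A i)) = r (\<Union>i. A i)" using sums by (rule sums_unique[symmetric])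
    finally show ?case .
  qed
qed

lemma emeasure_mu_pi:
  fixes t :: "'a \<Rightarrow> 'h::chilbert_space \<Rightarrow> 'h"
  assumes kg: "is_kgraph G" and fin: "finite_kgraph G" and rep: "pvm_of_rep G t P"
    and mu: "is_mu_pi G t \<xi> \<mu>" and E: "E \<in> sets (path_space G)"
  shows "emeasure \<mu> E = ennreal ((norm (P E \<xi>))\<^sup>2)"
proof -
  have pv: "pvm (path_space G) P" using rep by (simp add: pvm_of_rep_def)
  have sets_\<mu>: "sets \<mu> = sets (path_space G)" using mu by (simp add: is_mu_pi_def)
  have r_norm: "Re (cinner \<xi> (P E \<xi>)) = (norm (P E \<xi>))\<^sup>2" if "E \<in> sets (path_space G)" for E
    using cinner_projection_self[OF pvm_projection[OF pv that], of \<xi>] by simp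
  have "emeasure \<mu> (\<Union>l\<in>F. cyl G l) = ennreal (Re (cinner \<xi> (P (\<Union>l\<in>F. cyl G l) \<xi>)))"
    if F: "F \<subseteq> {l \<in> mor G. deg G l = n}" for n F
  proof -
    have "emeasure \<mu> (\<Union>l\<in>F. cyl G l) = (\<Sum>l\<in>F. emeasure \<mu> (cyl G l))"
      using F finite_deg_slice[OF fin F] disjoint_family_on_cyl[OF F]
      by (intro sum_emeasure[symmetric]) (auto simp: sets_\<mu> intro: cyl_in_sets)
    also have "\<dots> = (\<Sum>l\<in>F. ennreal (Re (cinner \<xi> (P (cyl G l) \<xi>))))"
      using F mu rep by (intro sum.cong) (auto simp: is_mu_pi_def pvm_of_rep_def)
    also have "\<dots> = ennreal (\<Sum>l\<in>F. Re (cinner \<xi> (P (cyl G l) \<xi>)))"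
      using F by (simp add: r_norm cyl_in_sets subset_iff sum_ennreal)
    finally show ?thesis by (simp add: pvm_UN_cyl[OF pv fin F] cinner_sum_right)
  qed
  from emeasure_eq_pvm_form[OF kg fin pv sets_\<mu> this E] show ?thesis by (simp add: r_norm[OF E])
qed

theorem mainTheorem17:
  fixes G :: "('a, 'k::finite) kgraph"
    and t :: "'a \<Rightarrow> 'h::chilbert_space \<Rightarrow> 'h"
    and P :: "(('k \<Rightarrow> nat) \<Rightarrow> ('k \<Rightarrow> nat) \<Rightarrow> 'a) set \<Rightarrow> 'h \<Rightarrow> 'h"
  assumes "is_kgraph G" and "finite_kgraph G" and "no_sources G"
    and "separable_type TYPE('h)"
    and "ck_family G t"
    and "\<forall>l\<in>mor G. t l \<circ> adj (t l) \<noteq> (\<lambda>_. 0)"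
    and "pvm_of_rep G t P"
    and "purely_atomic_pvm (path_space G) P"
  shows "(monic G t \<longleftrightarrow> (\<forall>x. is_atom (path_space G) P x \<longrightarrow> rank_one (P {x})))
    \<and> (monic G t \<longrightarrow> (\<forall>\<xi> \<mu>. cyclic_vector G t \<xi> \<longrightarrow> is_mu_pi G t \<xi> \<mu> \<longrightarrow>
                                 purely_atomic_measure \<mu>))"
proof -
  note kg = assms(1) and fin = assms(2) and rep = assms(7) and pa = assms(8)
  have pv: "pvm (path_space G) P" using rep by (simp add: pvm_of_rep_def)
  note cyclic_iff = cyclic_vector_iff_pvm_cyclic[OF kg fin rep]
  have "\<forall>l\<in>mor G. t l \<noteq> (\<lambda>_. 0)" using assms(6) by (auto simp: o_def)
  hence monic_iff: "monic G t \<longleftrightarrow> (\<exists>\<xi>. closure (cspan {P E \<xi> | E. E \<in> sets (path_space G)}) = UNIV)"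
    by (simp add: monic_def cyclic_iff)
  have "monic G t \<longleftrightarrow> (\<forall>x. is_atom (path_space G) P x \<longrightarrow> rank_one (P {x}))"
    unfolding monic_iff
    using pvm_cyclic_atom_rank_one[OF pv] pvm_cyclic_of_rank_one_atoms[OF assms(4) pv pa] by blast
  moreover have "purely_atomic_measure \<mu>" if "cyclic_vector G t \<xi>" and "is_mu_pi G t \<xi> \<mu>" for \<xi> \<mu>
    using that emeasure_mu_pi[OF kg fin rep]
    by (intro purely_atomic_measure_of_pvm[OF pv pa]) (auto simp: cyclic_iff is_mu_pi_def)
  ultimately show ?thesis by blast
qed

end
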